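(* Let $d\ge1$ be an integer and let $\chi^2(d)$ denote a chi-square random variable with $d$ degrees of freedom. For every $t>0$, with $Z_d(t)=t-d\log\!\big(1+\tfrac td\big)$, $$\mathbb P\big(\chi^2(d)\ge d+t\big)\le\frac{1}{\sqrt{2\pi Z_d(t)}}\exp\!\Big(-\frac{Z_d(t)}{2}\Big).$$ *)

theory Defs
  imports "HOL-Probability.Probability"
begin

definition chi_square_density :: "nat \<Rightarrow> real \<Rightarrow> real" where
  "chi_square_density d x =
     (if x > 0 then x powr (real d / 2 - 1) * exp (- x / 2) / (2 powr (real d / 2) * Gamma (real d / 2))
      else 0)"

end

theory Submission
  imports Defs "HOL-Real_Asymp.Real_Asymp"
begin

text \<open>
  Write \<open>f\<close> for the density, \<open>k = d/2\<close>, \<open>c = d + t\<close> and \<open>Z = t - d ln (1 + t/d)\<close>.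
  Bounding \<open>ln x\<close> by its tangent at \<open>c\<close> shows that \<open>f\<close> decays on \<open>[c, \<infinity>)\<close> at least like
  \<open>f c \<cdot> exp (-\<lambda> (x - c))\<close> with \<open>\<lambda> c = c/2 - max 0 (k - 1) \<ge> t/2\<close>, so the tail is at most \<open>f c / \<lambda>\<close>.
  Stirling's lower bound \<open>\<Gamma> k \<ge> \<surd>(2\<pi>) k\<^bsup>k - 1/2\<^esup> e\<^sup>-\<^sup>k\<close> turns this into
  \<open>f c \<le> \<surd>k e\<^bsup>-Z/2\<^esup> / (c \<surd>(2\<pi>))\<close>, and \<open>k Z \<le> t\<^sup>2/4\<close> (from \<open>ln (1 + u) \<ge> u - u\<^sup>2/2\<close>) gives
  \<open>\<surd>k / (\<lambda> c) \<le> 1 / \<surd>Z\<close>.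

  Stirling's bound holds for every \<open>x > 0\<close>: the error \<open>ln \<Gamma> x - ((x - 1/2) ln x - x + ln (2\<pi>)/2)\<close>
  decreases under \<open>x \<mapsto> x + 1\<close> and tends to \<open>0\<close> along \<open>x + n\<close>, the limit being identified
  by log-convexity of \<open>\<Gamma>\<close> and Legendre's duplication formula.
\<close>

lemma ln_add_one_ge_pade:
  fixes u :: real assumes "u \<ge> 0" shows "2 * u / (2 + u) \<le> ln (1 + u)"
proof -
  let ?f = "\<lambda>u. ln (1 + u) - 2 * u / (2 + u)"
  have "?f 0 \<le> ?f u"
  proof (rule DERIV_nonneg_imp_nondecreasing[OF assms])
    fix x :: real assume x: "0 \<le> x"
    have "(?f has_real_derivative 1 / (1 + x) - (2 * (2 + x) - 2 * x) / (2 + x)\<^sup>2) (at x)"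
      using x by (auto intro!: derivative_eq_intros simp: power2_eq_square)
    moreover have "0 \<le> 1 / (1 + x) - (2 * (2 + x) - 2 * x) / (2 + x)\<^sup>2"
      using x by (simp add: field_simps power2_eq_square le_divide_eq divide_le_eq)
    ultimately show "\<exists>y. (?f has_real_derivative y) (at x) \<and> 0 \<le> y" by blast
  qed
  then show ?thesis by simp
qed

lemma ln_add_one_le_pade:
  fixes u :: real assumes "u \<ge> 0" shows "ln (1 + u) \<le> u * (2 + u) / (2 * (1 + u))"
proof -
  let ?f = "\<lambda>u. u * (2 + u) / (2 * (1 + u)) - ln (1 + u)"
  have "?f 0 \<le> ?f u"
  proof (rule DERIV_nonneg_imp_nondecreasing[OF assms])
    fix x :: real assume x: "0 \<le> x"
    let ?D = "((1 * (2 + x) + x * 1) * (2 * (1 + x)) - x * (2 + x) * 2) / (2 * (1 + x))\<^sup>2 - 1 / (1 + x)"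
    have "(?f has_real_derivative ?D) (at x)"
      using x by (auto intro!: derivative_eq_intros simp: power2_eq_square)
    moreover have "0 \<le> ?D"
      using x by (simp add: field_simps power2_eq_square le_divide_eq divide_le_eq)
        (smt (verit) mult_nonneg_nonneg)
    ultimately show "\<exists>y. (?f has_real_derivative y) (at x) \<and> 0 \<le> y" by blast
  qed
  then show ?thesis by simp
qed

lemma ln_add_one_ge_quadratic:
  fixes u :: real assumes "u \<ge> 0" shows "u - u\<^sup>2 / 2 \<le> ln (1 + u)"
proof -
  let ?f = "\<lambda>u. ln (1 + u) - u + u\<^sup>2 / 2"
  have "?f 0 \<le> ?f u"
  proof (rule DERIV_nonneg_imp_nondecreasing[OF assms])
    fix x :: real assume x: "0 \<le> x"
    have "(?f has_real_derivative 1 / (1 + x) - 1 + x) (at x)"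
      using x by (auto intro!: derivative_eq_intros)
    moreover have "0 \<le> 1 / (1 + x) - 1 + x"
      using x by (simp add: field_simps power2_eq_square le_divide_eq divide_le_eq)
    ultimately show "\<exists>y. (?f has_real_derivative y) (at x) \<and> 0 \<le> y" by blast
  qed
  then show ?thesis by simp
qed

lemma Gamma_legendre_duplication_real:
  fixes x :: real assumes "x > 0"
  shows "Gamma x * Gamma (x + 1/2) = exp ((1 - 2 * x) * ln 2) * sqrt pi * Gamma (2 * x)"
proof -
  have "complex_of_real y \<notin> \<int>\<^sub>\<le>\<^sub>0" if "y > 0" for y
    using that by (auto elim!: nonpos_Ints_cases simp: complex_eq_iff)
  from this[of x] this[of "x + 1/2"] assms
  have "complex_of_real (Gamma x * Gamma (x + 1/2))
      = complex_of_real (exp ((1 - 2 * x) * ln 2) * sqrt pi * Gamma (2 * x))"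
    using Gamma_legendre_duplication[of "complex_of_real x"]
    by (simp add: Gamma_complex_of_real[symmetric] exp_of_real[symmetric])
  then show ?thesis by (simp only: of_real_eq_iff)
qed

lemma ln_Gamma_plus1_real:
  fixes x :: real assumes "x > 0" shows "ln (Gamma (x + 1)) = ln x + ln (Gamma x)"
proof -
  have "Gamma (x + 1) = x * Gamma x"
    using assms by (intro Gamma_plus1) (auto elim!: nonpos_Ints_cases)
  then show ?thesis using assms by (simp add: ln_mult_pos)
qed

lemma ln_Gamma_convex:
  fixes x y s :: real assumes "x > 0" "y > 0" "0 \<le> s" "s \<le> 1"
  shows "ln (Gamma ((1 - s) * x + s * y)) \<le> (1 - s) * ln (Gamma x) + s * ln (Gamma y)"
  using convex_onD[OF log_convex_Gamma_real, of s x y] assms by simp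

lemma ln_add_one_divide:
  fixes a b :: real assumes "a > 0" "a + b > 0" shows "ln (1 + b / a) = ln (a + b) - ln a"
proof -
  have "1 + b / a = (a + b) / a" using assms by (simp add: field_simps)
  then show ?thesis using assms by (simp add: ln_div)
qed

definition stirling_error :: "real \<Rightarrow> real" where
  "stirling_error x = ln (Gamma x) - ((x - 1/2) * ln x - x + ln (2 * pi) / 2)"

lemma stirling_error_plus1:
  fixes x :: real assumes "x > 0"
  shows "stirling_error (x + 1) = stirling_error x + 1 - (x + 1/2) * ln (1 + 1/x)"
proof -
  have "ln (1 + 1/x) = ln (x + 1) - ln x" using assms by (simp add: ln_add_one_divide)
  then show ?thesis
    unfolding stirling_error_def ln_Gamma_plus1_real[OF assms] by (simp only:) (simp add: algebra_simps)
qed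

lemma stirling_error_plus1_le:
  fixes x :: real assumes "x > 0" shows "stirling_error (x + 1) \<le> stirling_error x"
proof -
  have "2 * (1/x) / (2 + 1/x) \<le> ln (1 + 1/x)" using assms by (intro ln_add_one_ge_pade) auto
  moreover have "2 * (1/x) / (2 + 1/x) = 1 / (x + 1/2)" using assms by (simp add: field_simps)
  ultimately have "1 \<le> (x + 1/2) * ln (1 + 1/x)" using assms by (simp add: field_simps)
  then show ?thesis using stirling_error_plus1[OF assms] by simp
qed

lemma stirling_error_plus1_ge:
  fixes x :: real assumes "x > 0"
  shows "stirling_error x - (1 / (4 * x) - 1 / (4 * (x + 1))) \<le> stirling_error (x + 1)"
proof -
  have "ln (1 + 1/x) \<le> (1/x) * (2 + 1/x) / (2 * (1 + 1/x))"
    using assms by (intro ln_add_one_le_pade) auto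
  then have "(x + 1/2) * ln (1 + 1/x) \<le> (x + 1/2) * ((1/x) * (2 + 1/x) / (2 * (1 + 1/x)))"
    using assms by (intro mult_left_mono) auto
  also have "\<dots> = 1 + (1 / (4 * x) - 1 / (4 * (x + 1)))"
    using assms by (simp add: divide_simps; simp add: algebra_simps)
  finally show ?thesis using stirling_error_plus1[OF assms] by simp
qed

lemma stirling_error_shift_le:
  fixes x :: real assumes "x > 0" shows "stirling_error (x + real n) \<le> stirling_error x"
proof (induction n)
  case (Suc n)
  have "stirling_error (x + real n + 1) \<le> stirling_error (x + real n)"
    using assms by (intro stirling_error_plus1_le) simp
  with Suc show ?case by (simp add: add_ac)
qed simp

lemma stirling_error_shift_ge:
  fixes x :: real assumes "x > 0" shows "stirling_error x - 1 / (4 * x) \<le> stirling_error (x + real n)"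
proof -
  have "stirling_error x - 1 / (4 * x) + 1 / (4 * (x + real n)) \<le> stirling_error (x + real n)"
  proof (induction n)
    case (Suc n)
    have "stirling_error (x + real n) - (1 / (4 * (x + real n)) - 1 / (4 * (x + real n + 1)))
        \<le> stirling_error (x + real n + 1)"
      using assms by (intro stirling_error_plus1_ge) simp
    with Suc show ?case by (simp add: add_ac)
  qed simp
  moreover have "0 \<le> 1 / (4 * (x + real n))" using assms by simp
  ultimately show ?thesis by linarith
qed

text \<open>Log-convexity of \<open>Gamma\<close> between \<open>n\<close> and \<open>n + 1\<close> pins down the error at \<open>n + s\<close>.\<close>
lemma stirling_error_interpolation:
  fixes n s :: real assumes n: "n > 0" and s: "0 \<le> s" "s \<le> 1"
  shows "s - (n + 1/2) * ln (1 + s / n) \<le> stirling_error (n + s) - stirling_error n"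
    and "stirling_error (n + s) - stirling_error n \<le> s - (n + s - 1/2) * ln (1 + s / n)"
proof -
  have ln_ratio: "ln (1 + s / n) = ln (n + s) - ln n" using n s by (simp add: ln_add_one_divide)
  have diff: "stirling_error (n + s) - stirling_error n
      = ln (Gamma (n + s)) - ln (Gamma n) - (n + s - 1/2) * ln (n + s) + (n - 1/2) * ln n + s"
    by (simp add: stirling_error_def algebra_simps)
  have "(1 - s) * n + s * (n + 1) = n + s" by (simp add: algebra_simps)
  then have "ln (Gamma (n + s)) \<le> (1 - s) * ln (Gamma n) + s * ln (Gamma (n + 1))"
    using ln_Gamma_convex[of n "n + 1" s] n s by simp
  then have upper: "ln (Gamma (n + s)) \<le> ln (Gamma n) + s * ln n"
    unfolding ln_Gamma_plus1_real[OF n] by (simp add: algebra_simps)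
  have "(1 - (1 - s)) * (n + s) + (1 - s) * (n + s + 1) = n + 1" by (simp add: algebra_simps)
  then have "ln (Gamma (n + 1)) \<le> s * ln (Gamma (n + s)) + (1 - s) * ln (Gamma (n + s + 1))"
    using ln_Gamma_convex[of "n + s" "n + s + 1" "1 - s"] n s by simp
  then have lower: "ln (Gamma n) + ln n - (1 - s) * ln (n + s) \<le> ln (Gamma (n + s))"
    using n s ln_Gamma_plus1_real[of "n + s"] unfolding ln_Gamma_plus1_real[OF n]
    by (simp add: algebra_simps)
  show "s - (n + 1/2) * ln (1 + s / n) \<le> stirling_error (n + s) - stirling_error n"
    unfolding diff ln_ratio using lower by (simp add: algebra_simps)
  show "stirling_error (n + s) - stirling_error n \<le> s - (n + s - 1/2) * ln (1 + s / n)"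
    unfolding diff ln_ratio using upper by (simp add: algebra_simps)
qed

lemma stirling_error_duplication:
  fixes z :: real assumes "z > 0"
  shows "stirling_error z + stirling_error (z + 1/2)
       = stirling_error (2 * z) + 1/2 - z * ln (1 + 1 / (2 * z))"
proof -
  have "Gamma z > 0" "Gamma (z + 1/2) > 0" "Gamma (2 * z) > 0" using assms by auto
  then have "ln (Gamma (2 * z)) = ln (Gamma z) + ln (Gamma (z + 1/2)) - (1 - 2 * z) * ln 2 - ln pi / 2"
    using arg_cong[OF Gamma_legendre_duplication_real[OF assms], of ln]
    by (simp add: ln_mult ln_sqrt)
  moreover have "ln (1 + 1 / (2 * z)) = ln (z + 1/2) - ln z"
    using ln_add_one_divide[of z "1/2"] assms by simp
  moreover have "ln (2 * z) = ln 2 + ln z" "ln (2 * pi) = ln 2 + ln pi"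
    using assms by (simp_all add: ln_mult)
  ultimately show ?thesis
    unfolding stirling_error_def by (simp only:) (simp add: algebra_simps add_divide_distrib)
qed

lemma stirling_error_shift_diff_LIMSEQ:
  fixes s :: real assumes "0 \<le> s" "s \<le> 1"
  shows "(\<lambda>n. stirling_error (real n + 1 + s) - stirling_error (real n + 1)) \<longlonglongrightarrow> 0"
proof (rule tendsto_sandwich)
  show "\<forall>\<^sub>F n in sequentially. s - (real n + 1 + 1/2) * ln (1 + s / (real n + 1))
      \<le> stirling_error (real n + 1 + s) - stirling_error (real n + 1)"
    using stirling_error_interpolation(1)[of "real n + 1" s for n] assms by simp
  show "\<forall>\<^sub>F n in sequentially. stirling_error (real n + 1 + s) - stirling_error (real n + 1)
      \<le> s - (real n + 1 + s - 1/2) * ln (1 + s / (real n + 1))"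
    using stirling_error_interpolation(2)[of "real n + 1" s for n] assms by simp
  show "(\<lambda>n. s - (real n + 1 + 1/2) * ln (1 + s / (real n + 1))) \<longlonglongrightarrow> 0"
    using assms by real_asymp
  show "(\<lambda>n. s - (real n + 1 + s - 1/2) * ln (1 + s / (real n + 1))) \<longlonglongrightarrow> 0"
    using assms by real_asymp
qed

text \<open>The error decreases along the integers, so it has a limit \<open>L\<close>; the duplication formula at
  \<open>z = n\<close> then gives \<open>L + L = L\<close>.\<close>
lemma stirling_error_integers_LIMSEQ: "(\<lambda>n. stirling_error (real n + 1)) \<longlonglongrightarrow> 0"
proof -
  define a where "a n = stirling_error (real n + 1)" for n
  have "decseq a"
    using stirling_error_plus1_le[of "real n + 1" for n] by (intro decseq_SucI) (simp add: a_def)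
  moreover have "\<forall>n. stirling_error 1 - 1/4 \<le> a n"
    using stirling_error_shift_ge[of 1] by (simp add: a_def add.commute)
  ultimately obtain L where a: "a \<longlonglongrightarrow> L" using decseq_convergent by blast
  have half: "(\<lambda>n. stirling_error (real n + 1 + 1/2)) \<longlonglongrightarrow> L"
    using tendsto_add[OF stirling_error_shift_diff_LIMSEQ[of "1/2"] a] by (simp add: a_def)
  have "(\<lambda>n. a (2 * n + 1)) \<longlonglongrightarrow> L"
    using LIMSEQ_subseq_LIMSEQ[OF a, of "\<lambda>n. 2 * n + 1"] by (simp add: strict_mono_def o_def)
  moreover have "(\<lambda>n. 1/2 - (real n + 1) * ln (1 + 1 / (2 * (real n + 1)))) \<longlonglongrightarrow> 0"
    by real_asymp
  ultimately have "(\<lambda>n. a (2 * n + 1) + (1/2 - (real n + 1) * ln (1 + 1 / (2 * (real n + 1)))))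
      \<longlonglongrightarrow> L + 0"
    by (rule tendsto_add)
  moreover have "a n + stirling_error (real n + 1 + 1/2)
      = a (2 * n + 1) + (1/2 - (real n + 1) * ln (1 + 1 / (2 * (real n + 1))))" for n
    using stirling_error_duplication[of "real n + 1"] by (simp add: a_def algebra_simps)
  ultimately have "(\<lambda>n. a n + stirling_error (real n + 1 + 1/2)) \<longlonglongrightarrow> L" by simp
  with tendsto_add[OF a half] have "L + L = L" using LIMSEQ_unique by blast
  with a show ?thesis by (simp add: a_def[abs_def])
qed

lemma stirling_error_shift_LIMSEQ:
  fixes x :: real assumes "x > 0" shows "(\<lambda>n. stirling_error (x + real n)) \<longlonglongrightarrow> 0"
proof -
  define s where "s = frac x"
  define j where "j = nat \<lfloor>x\<rfloor>"
  have s: "0 \<le> s" "s \<le> 1" by (simp_all add: s_def frac_lt_1 less_imp_le)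
  have "(\<lambda>n. (stirling_error (real n + 1 + s) - stirling_error (real n + 1)) + stirling_error (real n + 1))
      \<longlonglongrightarrow> 0 + 0"
    by (intro tendsto_add stirling_error_shift_diff_LIMSEQ stirling_error_integers_LIMSEQ s)
  then have "(\<lambda>n. stirling_error (s + real (Suc n))) \<longlonglongrightarrow> 0" by (simp add: add_ac)
  then have "(\<lambda>n. stirling_error (s + real (n + j))) \<longlonglongrightarrow> 0"
    by (rule LIMSEQ_ignore_initial_segment[OF LIMSEQ_imp_Suc])
  moreover have "x + real n = s + real (n + j)" for n
    using assms by (simp add: s_def j_def frac_def)
  ultimately show ?thesis by (simp only:)
qed

lemma stirling_error_nonneg:
  fixes x :: real assumes "x > 0" shows "0 \<le> stirling_error x"
  using stirling_error_shift_LIMSEQ[OF assms] stirling_error_shift_le[OF assms]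
  by (intro LIMSEQ_le_const2) auto

theorem Gamma_ge_stirling:
  fixes x :: real assumes "x > 0"
  shows "sqrt (2 * pi) * x powr (x - 1/2) * exp (- x) \<le> Gamma x"
proof -
  have "sqrt (2 * pi) = exp (ln (2 * pi) / 2)" by (simp add: powr_def flip: powr_half_sqrt)
  then have "sqrt (2 * pi) * x powr (x - 1/2) * exp (- x) = exp ((x - 1/2) * ln x - x + ln (2 * pi) / 2)"
    using assms by (simp add: powr_def mult_exp_exp algebra_simps)
  also have "\<dots> \<le> exp (ln (Gamma x))"
    using stirling_error_nonneg[OF assms] by (simp add: stirling_error_def)
  also have "\<dots> = Gamma x" using assms by simp
  finally show ?thesis .
qed

lemma nn_integral_exp_tail:
  fixes lam c B :: real assumes lam: "lam > 0" and B: "B \<ge> 0"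
  shows "(\<integral>\<^sup>+x. ennreal (B * exp (- lam * (x - c))) * indicator {c..} x \<partial>lborel) = ennreal (B / lam)"
proof -
  have "filterlim (\<lambda>x. - lam * (x - c)) at_bot at_top"
    using lam by real_asymp
  then have "((\<lambda>x. - B / lam * exp (- lam * (x - c))) \<longlongrightarrow> - B / lam * 0) at_top"
    by (intro tendsto_mult tendsto_const filterlim_compose[OF exp_at_bot])
  then have "(\<integral>\<^sup>+x. ennreal (B * exp (- lam * (x - c))) * indicator {c..} x \<partial>lborel)
      = 0 - (- B / lam * exp (- lam * (c - c)))"
    using lam B by (intro nn_integral_FTC_atLeast) (auto intro!: derivative_eq_intros)
  then show ?thesis by simp
qed

lemma distributed_tail_le_exp_majorant:
  fixes X :: "'a \<Rightarrow> real" and f :: "real \<Rightarrow> real"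
  assumes "distributed M lborel X f" and "lam > 0" and "B \<ge> 0"
    and majorant: "\<And>x. x \<ge> c \<Longrightarrow> f x \<le> B * exp (- lam * (x - c))"
  shows "measure M {\<omega> \<in> space M. X \<omega> \<ge> c} \<le> B / lam"
proof -
  have "X -` {c..} \<inter> space M = {\<omega> \<in> space M. X \<omega> \<ge> c}" by auto
  then have "emeasure M {\<omega> \<in> space M. X \<omega> \<ge> c} = (\<integral>\<^sup>+x. ennreal (f x) * indicator {c..} x \<partial>lborel)"
    using distributed_emeasure[OF assms(1), of "{c..}"] by simp
  also have "\<dots> \<le> (\<integral>\<^sup>+x. ennreal (B * exp (- lam * (x - c))) * indicator {c..} x \<partial>lborel)"
    using majorant by (intro nn_integral_mono) (simp add: ennreal_leI split: split_indicator)
  also have "\<dots> = ennreal (B / lam)" using assms by (intro nn_integral_exp_tail)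
  finally show ?thesis
    using assms by (simp add: measure_def enn2real_leI)
qed

lemma powr_le_powr_mult_exp:
  fixes m c x :: real assumes "0 < c" "c \<le> x"
  shows "x powr m \<le> c powr m * exp (max 0 m * (x - c) / c)"
proof (cases "m \<ge> 0")
  case True
  have "ln (x / c) \<le> x / c - 1" using assms by (intro ln_le_minus_one) auto
  then have "m * ln x \<le> m * ln c + m * (x - c) / c"
    using assms True mult_left_mono[of "ln x - ln c" "(x - c) / c" m]
    by (simp add: ln_div diff_divide_distrib algebra_simps)
  then have "exp (m * ln x) \<le> exp (m * ln c + m * (x - c) / c)" by simp
  with assms True show ?thesis by (simp add: powr_def exp_add)
next
  case False
  then show ?thesis using assms by (simp add: powr_mono2')
qed

text \<open>For \<open>d = 1\<close> the power \<open>x\<^bsup>d/2-1\<^esup>\<close> is decreasing and only \<open>exp (-x/2)\<close> contributes to the decay.\<close>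
lemma chi_square_density_tail_decay:
  fixes c x :: real assumes "0 < c" "c \<le> x"
  shows "chi_square_density d x
    \<le> chi_square_density d c * exp (- (1/2 - max 0 (real d / 2 - 1) / c) * (x - c))"
proof -
  let ?m = "real d / 2 - 1" and ?N = "2 powr (real d / 2) * Gamma (real d / 2)"
  have "x powr ?m * exp (- x / 2) \<le> c powr ?m * exp (max 0 ?m * (x - c) / c) * exp (- x / 2)"
    using powr_le_powr_mult_exp[OF assms] by (intro mult_right_mono) auto
  also have "\<dots> = c powr ?m * exp (- c / 2) * exp (- (1/2 - max 0 ?m / c) * (x - c))"
    using assms by (simp add: mult_exp_exp field_simps)
  finally have "x powr ?m * exp (- x / 2)
      \<le> c powr ?m * exp (- c / 2) * exp (- (1/2 - max 0 ?m / c) * (x - c))" .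
  moreover have "?N \<ge> 0" by (cases "d = 0") auto
  ultimately have "x powr ?m * exp (- x / 2) / ?N
      \<le> c powr ?m * exp (- c / 2) * exp (- (1/2 - max 0 ?m / c) * (x - c)) / ?N"
    by (intro divide_right_mono) auto
  then show ?thesis using assms by (simp add: chi_square_density_def mult_ac)
qed

lemma chi_square_density_nonneg: "chi_square_density d x \<ge> 0"
  by (cases "d = 0") (auto simp: chi_square_density_def)

lemma chi_square_density_le_stirling:
  fixes x :: real assumes "d \<ge> 1" "x > 0"
  shows "chi_square_density d x
    \<le> sqrt (real d / 2) / (x * sqrt (2 * pi)) * exp (- (x - real d - real d * ln (x / real d)) / 2)"
proof -
  define k where "k = real d / 2"
  have k: "k > 0" and d: "real d = 2 * k" using assms by (simp_all add: k_def)
  define S where "S = sqrt (2 * pi) * k powr (k - 1/2) * exp (- k)"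
  have "S > 0" using k by (simp add: S_def)
  have "chi_square_density d x = x powr (k - 1) * exp (- x / 2) / (2 powr k * Gamma k)"
    using assms by (simp add: chi_square_density_def k_def)
  also have "\<dots> \<le> x powr (k - 1) * exp (- x / 2) / (2 powr k * S)"
    using Gamma_ge_stirling[OF k] \<open>S > 0\<close> by (intro divide_left_mono mult_left_mono) (auto simp: S_def)
  also have "\<dots> = sqrt k / (x * sqrt (2 * pi)) * exp (- (x - 2 * k - 2 * k * ln (x / (2 * k))) / 2)"
  proof (subst ln_inj_iff[symmetric])
    let ?E = "(k - 1) * ln x - x / 2 + k - k * ln 2 - (k - 1/2) * ln k - ln (2 * pi) / 2"
    have "ln (x powr (k - 1) * exp (- x / 2) / (2 powr k * S)) = ?E"
      using assms k by (simp add: S_def ln_mult ln_div ln_sqrt)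
    moreover have "ln (sqrt k / (x * sqrt (2 * pi)) * exp (- (x - 2 * k - 2 * k * ln (x / (2 * k))) / 2)) = ?E"
      using assms k by (simp add: ln_mult ln_div ln_sqrt) argo
    ultimately show "ln (x powr (k - 1) * exp (- x / 2) / (2 powr k * S))
        = ln (sqrt k / (x * sqrt (2 * pi)) * exp (- (x - 2 * k - 2 * k * ln (x / (2 * k))) / 2))"
      by (simp only:)
  qed (use assms k \<open>S > 0\<close> in simp_all)
  finally show ?thesis by (simp add: d)
qed

lemma ln_add_one_gap_le:
  fixes a t :: real assumes "a > 0" "t \<ge> 0"
  shows "a * (t - a * ln (1 + t / a)) \<le> t\<^sup>2 / 2"
proof -
  have "t / a - (t / a)\<^sup>2 / 2 \<le> ln (1 + t / a)"
    using assms by (intro ln_add_one_ge_quadratic) simp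
  then have "a\<^sup>2 * (t / a - (t / a)\<^sup>2 / 2) \<le> a\<^sup>2 * ln (1 + t / a)"
    by (rule mult_left_mono) simp
  moreover have "a\<^sup>2 * (t / a - (t / a)\<^sup>2 / 2) = a * t - t\<^sup>2 / 2"
    using assms by (simp add: field_simps power2_eq_square)
  ultimately show ?thesis by (simp add: algebra_simps power2_eq_square)
qed

lemma chi_square_density_div_rate_le:
  fixes t lam :: real
  assumes "d \<ge> 1" "t > 0" "lam > 0" "t / 2 \<le> lam * (real d + t)"
  shows "chi_square_density d (real d + t) / lam
    \<le> 1 / sqrt (2 * pi * (t - real d * ln (1 + t / real d)))
        * exp (- (t - real d * ln (1 + t / real d)) / 2)"
proof -
  define c where "c = real d + t"
  define Z where "Z = t - real d * ln (1 + t / real d)"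
  have c: "c > 0" using assms by (simp add: c_def)
  have Z: "Z > 0"
    using ln_add_one_self_less_self[of "t / real d"] assms by (simp add: Z_def field_simps)
  have "sqrt (real d / 2 * Z) \<le> sqrt ((t / 2)\<^sup>2)"
    using ln_add_one_gap_le[of "real d" t] assms by (intro real_sqrt_le_mono) (simp add: Z_def power_divide)
  with assms have "sqrt (real d / 2 * Z) * sqrt (2 * pi) \<le> lam * c * sqrt (2 * pi)"
    by (intro mult_right_mono) (auto simp: c_def)
  then have rate: "sqrt (real d / 2) * sqrt (2 * pi * Z) \<le> lam * c * sqrt (2 * pi)"
    by (simp only: real_sqrt_mult[symmetric]) (simp add: mult_ac)
  have "c - real d - real d * ln (c / real d) = Z"
    using assms by (simp add: c_def Z_def add_divide_distrib)
  then have "chi_square_density d c \<le> sqrt (real d / 2) / (c * sqrt (2 * pi)) * exp (- Z / 2)"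
    using chi_square_density_le_stirling[OF assms(1) c] by simp
  then have "chi_square_density d c / lam \<le> sqrt (real d / 2) / (c * sqrt (2 * pi)) * exp (- Z / 2) / lam"
    using assms by (intro divide_right_mono) auto
  also have "\<dots> \<le> 1 / sqrt (2 * pi * Z) * exp (- Z / 2)"
    using rate assms c Z by (simp add: field_simps)
  finally show ?thesis by (simp add: c_def Z_def)
qed

theorem lemma2:
  fixes M :: "'a measure" and X :: "'a \<Rightarrow> real" and d :: nat and t :: real
  assumes "prob_space M"
    and "distributed M lborel X (chi_square_density d)"
    and "d \<ge> 1"
    and "t > 0"
  shows "measure M {\<omega> \<in> space M. X \<omega> \<ge> real d + t}
    \<le> 1 / sqrt (2 * pi * (t - real d * ln (1 + t / real d)))
        * exp (- (t - real d * ln (1 + t / real d)) / 2)"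
proof -
  define c where "c = real d + t"
  define lam where "lam = 1/2 - max 0 (real d / 2 - 1) / c"
  have c: "c > 0" using assms by (simp add: c_def)
  have lam: "lam > 0" "t / 2 \<le> lam * c"
    using assms c by (auto simp: lam_def c_def field_simps max_def)
  have "measure M {\<omega> \<in> space M. X \<omega> \<ge> c} \<le> chi_square_density d c / lam"
  proof (rule distributed_tail_le_exp_majorant[OF assms(2) lam(1)])
    show "chi_square_density d x \<le> chi_square_density d c * exp (- lam * (x - c))" if "c \<le> x" for x
      using chi_square_density_tail_decay[OF c that] by (simp add: lam_def)
  qed (simp add: chi_square_density_nonneg)
  also have "\<dots> \<le> 1 / sqrt (2 * pi * (t - real d * ln (1 + t / real d)))
        * exp (- (t - real d * ln (1 + t / real d)) / 2)"
    using chi_square_density_div_rate_le[OF assms(3,4) lam(1)] lam(2) by (simp add: c_def)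
  finally show ?thesis by (simp add: c_def)
qed

end
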